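(* Let $Y$ be a random simplicial complex on $[n]=\{0,\dots,n\}$ drawn from the lower model with probability parameters satisfying $p\le p_\sigma\le P$ for all $\sigma$, where $p=e^{-a}$, $P=e^{-A}$ are constants in $(0,1)$ independent of $n$ (so $0<A\le a$). For $y>0$ let $\beta(n,y)=\log_2\ln n+\log_2\log_2\ln n-\log_2 y$. Let $\epsilon_0>0$ be a fixed constant. Then asymptotically almost surely $$\lfloor\beta(n,a)\rfloor-1\le\dim Y\le\beta(n,A)-1+\epsilon_0.$$
   Context: Lower model: each non-empty proper subset $\sigma\subsetneq[n]$ is included independently with probability $p_\sigma$ into a random hypergraph $X$, and $Y$ is the largest simplicial complex contained in $X$ ($\sigma\in Y$ iff every non-empty $\tau\subseteq\sigma$ lies in $X$). A simplex $\sigma$ has dimension $|\sigma|-1$. Asymptotically almost surely means with probability tending to $1$ as $n\to\infty$. *)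

theory Defs
  imports "HOL-Probability.Probability"
begin

definition faces_of :: "nat \<Rightarrow> nat set set" where
  "faces_of n = {\<sigma>. \<sigma> \<noteq> {} \<and> \<sigma> \<subset> {0..n}}"

text \<open>Lower model hypergraph X: each candidate face \<sigma> is included independently
  with probability p \<sigma>; X is represented by its indicator function.\<close>
definition lower_model_hypergraph :: "nat \<Rightarrow> (nat set \<Rightarrow> real) \<Rightarrow> (nat set \<Rightarrow> bool) pmf" where
  "lower_model_hypergraph n p = Pi_pmf (faces_of n) False (\<lambda>\<sigma>. bernoulli_pmf (p \<sigma>))"

text \<open>Largest simplicial complex contained in X.\<close>
definition lower_complex :: "(nat set \<Rightarrow> bool) \<Rightarrow> nat set set" where
  "lower_complex X = {\<sigma>. \<sigma> \<noteq> {} \<and> (\<forall>\<tau>. \<tau> \<noteq> {} \<and> \<tau> \<subseteq> \<sigma> \<longrightarrow> X \<tau>)}"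

definition complex_dim :: "nat set set \<Rightarrow> int" where
  "complex_dim Y = (if Y = {} then -1 else int (Max (card ` Y)) - 1)"

definition beta_fn :: "nat \<Rightarrow> real \<Rightarrow> real" where
  "beta_fn n y = log 2 (ln (real n)) + log 2 (log 2 (ln (real n))) - log 2 y"

end

theory Submission
  imports Defs "HOL-Real_Asymp.Real_Asymp"
begin

(* A k-set s of vertices is a face of Y exactly when all 2^k - 1 non-empty subsets of s lie in X,
   an event of probability between p^(2^k - 1) and P^(2^k - 1).

   Upper bound: a union bound over the (n+1 choose k) candidate k-sets gives
   Pr(dim Y >= k - 1) <= (n+1)^k P^(2^k - 1), which is exp(-Omega(ln n log2 ln n)) as soon as
   k > beta(n,A) + eps, because then A 2^k >= 2^eps ln n log2 ln n.

   Lower bound: for k = floor(beta(n,a)) apply the second moment method to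
   Z = sum over k-sets s of [s in Y] / Pr(s in Y).  Two k-sets sharing j vertices are positively
   correlated by a factor of at most p^-(2^j - 1), while only a fraction (k/(n+1))^j of all k-sets
   contain a given j-set; since 2^j / j is non-decreasing this yields
   Pr(Z = 0) <= 2^k exp(-(ln((n+1)/k) - a 2^k / k)).  Here a 2^k <= ln n log2 ln n and
   k >= log2 ln n + 1, so the exponent is at least ln n / (log2 ln n + 1) - O(log log n). *)

section \<open>Simplex events in the lower model\<close>

definition simplex_event :: "'a set \<Rightarrow> ('a set \<Rightarrow> bool) set" where
  "simplex_event \<sigma> = {X. \<forall>\<tau>\<in>Pow \<sigma> - {{}}. X \<tau>}"

lemma simplex_event_Int:
  "simplex_event \<sigma> \<inter> simplex_event \<sigma>' = {X. \<forall>\<tau>\<in>(Pow \<sigma> - {{}}) \<union> (Pow \<sigma>' - {{}}). X \<tau>}"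
  by (auto simp: simplex_event_def)

lemma simplex_event_mono: "\<tau> \<subseteq> \<sigma> \<Longrightarrow> simplex_event \<sigma> \<subseteq> simplex_event \<tau>"
  by (auto simp: simplex_event_def)

lemma mem_lower_complex_iff: "\<sigma> \<in> lower_complex X \<longleftrightarrow> \<sigma> \<noteq> {} \<and> X \<in> simplex_event \<sigma>"
  by (auto simp: lower_complex_def simplex_event_def)

lemma complex_dim_ge_iff:
  assumes "finite Y" "1 \<le> k"
  shows "int k - 1 \<le> complex_dim Y \<longleftrightarrow> (\<exists>\<sigma>\<in>Y. k \<le> card \<sigma>)"
proof (cases "Y = {}")
  case False
  then have "k \<le> Max (card ` Y) \<longleftrightarrow> (\<exists>\<sigma>\<in>Y. k \<le> card \<sigma>)"
    using assms(1) by (simp add: Max_ge_iff)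
  moreover have "int k - 1 \<le> complex_dim Y \<longleftrightarrow> k \<le> Max (card ` Y)"
    using False by (auto simp: complex_dim_def)
  ultimately show ?thesis
    by blast
qed (use assms(2) in \<open>simp add: complex_dim_def\<close>)

lemma prob_mono_on_set_pmf:
  "A \<inter> set_pmf M \<subseteq> B \<Longrightarrow> measure_pmf.prob M A \<le> measure_pmf.prob M B"
  by (metis measure_Int_set_pmf measure_pmf.finite_measure_mono sets_measure_pmf UNIV_I)

lemma finite_faces_of: "finite (faces_of n)"
  unfolding faces_of_def by (rule finite_subset[of _ "Pow {0..n}"]) auto

lemma Pow_minus_empty_subset_faces_of:
  assumes "\<sigma> \<subseteq> {0..n}" "card \<sigma> \<le> n"
  shows "Pow \<sigma> - {{}} \<subseteq> faces_of n"
proof -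
  have "\<sigma> \<noteq> {0..n}"
    using assms(2) by auto
  then show ?thesis
    using assms(1) by (auto simp: faces_of_def)
qed

lemma prob_lower_model_hypergraph_all:
  assumes "H \<subseteq> faces_of n" "\<And>\<tau>. \<tau> \<in> H \<Longrightarrow> 0 \<le> q \<tau> \<and> q \<tau> \<le> 1"
  shows "measure_pmf.prob (lower_model_hypergraph n q) {X. \<forall>\<tau>\<in>H. X \<tau>} = (\<Prod>\<tau>\<in>H. q \<tau>)"
proof -
  have "{X. \<forall>\<tau>\<in>H. X \<tau>} = Pi (faces_of n) (\<lambda>\<tau>. if \<tau> \<in> H then {True} else UNIV)"
    using assms(1) by (auto simp: Pi_def)
  then have "measure_pmf.prob (lower_model_hypergraph n q) {X. \<forall>\<tau>\<in>H. X \<tau>}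
        = (\<Prod>\<tau>\<in>faces_of n. measure_pmf.prob (bernoulli_pmf (q \<tau>)) (if \<tau> \<in> H then {True} else UNIV))"
    unfolding lower_model_hypergraph_def by (simp only: measure_Pi_pmf_Pi[OF finite_faces_of])
  also have "\<dots> = (\<Prod>\<tau>\<in>faces_of n. if \<tau> \<in> H then q \<tau> else 1)"
    by (rule prod.cong) (auto simp: measure_pmf_single assms(2))
  also have "\<dots> = (\<Prod>\<tau>\<in>H. q \<tau>)"
    using assms(1) by (subst prod.If_cases[OF finite_faces_of]) (simp add: Int_absorb1)
  finally show ?thesis .
qed

lemma set_pmf_lower_model_hypergraph:
  "X \<in> set_pmf (lower_model_hypergraph n q) \<Longrightarrow> X \<tau> \<Longrightarrow> \<tau> \<in> faces_of n"
  using set_Pi_pmf_subset[OF finite_faces_of, of n False "\<lambda>\<sigma>. bernoulli_pmf (q \<sigma>)"]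
  unfolding lower_model_hypergraph_def by auto

lemma finite_set_pmf_lower_model_hypergraph: "finite (set_pmf (lower_model_hypergraph n q))"
proof (rule finite_subset)
  show "set_pmf (lower_model_hypergraph n q)
          \<subseteq> PiE_dflt (faces_of n) False (set_pmf \<circ> (\<lambda>\<sigma>. bernoulli_pmf (q \<sigma>)))"
    unfolding lower_model_hypergraph_def by (rule set_Pi_pmf_subset'[OF finite_faces_of])
  show "finite (PiE_dflt (faces_of n) False (set_pmf \<circ> (\<lambda>\<sigma>. bernoulli_pmf (q \<sigma>))))"
    by (rule finite_PiE_dflt[OF finite_faces_of]) (rule finite_subset[of _ UNIV], auto)
qed

lemma lower_complex_subset_faces_of:
  "X \<in> set_pmf (lower_model_hypergraph n q) \<Longrightarrow> lower_complex X \<subseteq> faces_of n"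
  using set_pmf_lower_model_hypergraph by (auto simp: lower_complex_def)

lemma finite_lower_complex:
  "X \<in> set_pmf (lower_model_hypergraph n q) \<Longrightarrow> finite (lower_complex X)"
  using lower_complex_subset_faces_of finite_faces_of by (rule finite_subset)

lemma prob_simplex_event:
  assumes "Pow \<sigma> - {{}} \<subseteq> faces_of n" "\<And>\<tau>. \<tau> \<in> faces_of n \<Longrightarrow> 0 \<le> q \<tau> \<and> q \<tau> \<le> 1"
  shows "measure_pmf.prob (lower_model_hypergraph n q) (simplex_event \<sigma>) = (\<Prod>\<tau>\<in>Pow \<sigma> - {{}}. q \<tau>)"
  unfolding simplex_event_def using assms by (intro prob_lower_model_hypergraph_all) auto

lemma prob_simplex_event_le:
  assumes "finite \<sigma>" "\<And>\<tau>. \<tau> \<in> faces_of n \<Longrightarrow> 0 \<le> q \<tau> \<and> q \<tau> \<le> c" "0 \<le> c" "c \<le> 1"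
  shows "measure_pmf.prob (lower_model_hypergraph n q) (simplex_event \<sigma>) \<le> c ^ (2 ^ card \<sigma> - 1)"
proof (cases "Pow \<sigma> - {{}} \<subseteq> faces_of n")
  case True
  have "measure_pmf.prob (lower_model_hypergraph n q) (simplex_event \<sigma>) = (\<Prod>\<tau>\<in>Pow \<sigma> - {{}}. q \<tau>)"
    using True assms(2,4) by (intro prob_simplex_event) (auto intro: order_trans)
  also have "\<dots> \<le> (\<Prod>\<tau>\<in>Pow \<sigma> - {{}}. c)"
    using True assms(2) by (intro prod_mono) auto
  finally show ?thesis
    using assms(1) by (simp add: card_Pow)
next
  case False
  then obtain \<tau> where \<tau>: "\<tau> \<in> Pow \<sigma> - {{}}" "\<tau> \<notin> faces_of n"
    by blast
  have "X \<notin> simplex_event \<sigma>" if "X \<in> set_pmf (lower_model_hypergraph n q)" for X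
    using \<tau> set_pmf_lower_model_hypergraph[OF that] by (auto simp: simplex_event_def)
  then have "measure_pmf.prob (lower_model_hypergraph n q) (simplex_event \<sigma>) = 0"
    by (simp add: measure_pmf_zero_iff disjoint_iff)
  then show ?thesis
    using assms(3) by simp
qed

lemma prob_simplex_event_ge:
  assumes "finite \<sigma>" "Pow \<sigma> - {{}} \<subseteq> faces_of n"
    and "\<And>\<tau>. \<tau> \<in> faces_of n \<Longrightarrow> c \<le> q \<tau> \<and> q \<tau> \<le> 1" "0 \<le> c"
  shows "c ^ (2 ^ card \<sigma> - 1) \<le> measure_pmf.prob (lower_model_hypergraph n q) (simplex_event \<sigma>)"
proof -
  have "c ^ (2 ^ card \<sigma> - 1) = (\<Prod>\<tau>\<in>Pow \<sigma> - {{}}. c)"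
    using assms(1) by (simp add: card_Pow)
  also have "\<dots> \<le> (\<Prod>\<tau>\<in>Pow \<sigma> - {{}}. q \<tau>)"
    using assms(2-4) by (intro prod_mono) auto
  also have "\<dots> = measure_pmf.prob (lower_model_hypergraph n q) (simplex_event \<sigma>)"
    using assms(2-4) by (intro prob_simplex_event[symmetric]) (auto intro: order_trans)
  finally show ?thesis .
qed

lemma prob_simplex_event_Int:
  assumes "Pow \<sigma> - {{}} \<subseteq> faces_of n" "Pow \<sigma>' - {{}} \<subseteq> faces_of n"
    and "\<And>\<tau>. \<tau> \<in> faces_of n \<Longrightarrow> 0 \<le> q \<tau> \<and> q \<tau> \<le> 1"
  defines "P \<equiv> measure_pmf.prob (lower_model_hypergraph n q)"
  shows "P (simplex_event \<sigma> \<inter> simplex_event \<sigma>') * P (simplex_event (\<sigma> \<inter> \<sigma>'))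
         = P (simplex_event \<sigma>) * P (simplex_event \<sigma>')"
proof -
  have fin: "finite (Pow \<sigma> - {{}})" "finite (Pow \<sigma>' - {{}})"
    using finite_subset[OF assms(1) finite_faces_of] finite_subset[OF assms(2) finite_faces_of] .
  have "Pow (\<sigma> \<inter> \<sigma>') - {{}} = (Pow \<sigma> - {{}}) \<inter> (Pow \<sigma>' - {{}})"
    by auto
  moreover have "P (simplex_event \<sigma> \<inter> simplex_event \<sigma>') = (\<Prod>\<tau>\<in>(Pow \<sigma> - {{}}) \<union> (Pow \<sigma>' - {{}}). q \<tau>)"
    unfolding P_def simplex_event_Int using assms(1-3) by (intro prob_lower_model_hypergraph_all) auto
  moreover have "P (simplex_event (\<sigma> \<inter> \<sigma>')) = (\<Prod>\<tau>\<in>Pow (\<sigma> \<inter> \<sigma>') - {{}}. q \<tau>)"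
    unfolding P_def using assms(1,3) by (intro prob_simplex_event) auto
  ultimately show ?thesis
    using assms(1-3) by (simp add: P_def prob_simplex_event prod.union_inter[OF fin])
qed

lemma prob_simplex_event_pos:
  fixes a :: real
  assumes "finite \<sigma>" "Pow \<sigma> - {{}} \<subseteq> faces_of n"
    and "\<And>\<tau>. \<tau> \<in> faces_of n \<Longrightarrow> exp (- a) \<le> q \<tau> \<and> q \<tau> \<le> 1"
  shows "0 < measure_pmf.prob (lower_model_hypergraph n q) (simplex_event \<sigma>)"
  using prob_simplex_event_ge[of \<sigma> n "exp (- a)" q] assms
  by (simp add: less_le_trans[OF zero_less_power[OF exp_gt_zero]])

lemma simplex_event_correlation_le:
  fixes a :: real
  assumes q: "\<And>\<tau>. \<tau> \<in> faces_of n \<Longrightarrow> exp (- a) \<le> q \<tau> \<and> q \<tau> \<le> 1"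
    and "finite \<sigma>" "finite \<sigma>'" "Pow \<sigma> - {{}} \<subseteq> faces_of n" "Pow \<sigma>' - {{}} \<subseteq> faces_of n"
  defines "P \<equiv> measure_pmf.prob (lower_model_hypergraph n q)"
  shows "P (simplex_event \<sigma> \<inter> simplex_event \<sigma>') / (P (simplex_event \<sigma>) * P (simplex_event \<sigma>'))
         \<le> exp a ^ (2 ^ card (\<sigma> \<inter> \<sigma>') - 1)"
proof -
  have "Pow (\<sigma> \<inter> \<sigma>') - {{}} \<subseteq> faces_of n"
    using assms(4) by auto
  then have lower: "exp (- a) ^ (2 ^ card (\<sigma> \<inter> \<sigma>') - 1) \<le> P (simplex_event (\<sigma> \<inter> \<sigma>'))"
    unfolding P_def using assms(2) q by (intro prob_simplex_event_ge) auto
  have pos: "0 < P (simplex_event \<sigma>)" "0 < P (simplex_event \<sigma>')" "0 < P (simplex_event (\<sigma> \<inter> \<sigma>'))"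
    unfolding P_def using assms(2-5) q \<open>Pow (\<sigma> \<inter> \<sigma>') - {{}} \<subseteq> faces_of n\<close>
    by (auto intro!: prob_simplex_event_pos)
  moreover have "0 \<le> q \<tau> \<and> q \<tau> \<le> 1" if "\<tau> \<in> faces_of n" for \<tau>
    using q[OF that] exp_ge_zero[of "- a"] by linarith
  then have "P (simplex_event \<sigma> \<inter> simplex_event \<sigma>') * P (simplex_event (\<sigma> \<inter> \<sigma>'))
      = P (simplex_event \<sigma>) * P (simplex_event \<sigma>')"
    unfolding P_def using assms(4,5) by (intro prob_simplex_event_Int)
  ultimately have "P (simplex_event \<sigma> \<inter> simplex_event \<sigma>') / (P (simplex_event \<sigma>) * P (simplex_event \<sigma>'))
      = 1 / P (simplex_event (\<sigma> \<inter> \<sigma>'))"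
    by (auto simp: field_simps)
  also have "\<dots> \<le> 1 / exp (- a) ^ (2 ^ card (\<sigma> \<inter> \<sigma>') - 1)"
    using lower pos(3) by (intro divide_left_mono) auto
  also have "\<dots> = exp a ^ (2 ^ card (\<sigma> \<inter> \<sigma>') - 1)"
    by (simp add: exp_minus power_inverse divide_inverse)
  finally show ?thesis .
qed

lemma prob_complex_dim_ge_le:
  assumes "\<And>\<tau>. \<tau> \<in> faces_of n \<Longrightarrow> 0 \<le> q \<tau> \<and> q \<tau> \<le> c" "0 \<le> c" "c \<le> 1" "1 \<le> k"
  shows "measure_pmf.prob (lower_model_hypergraph n q) {X. int k - 1 \<le> complex_dim (lower_complex X)}
         \<le> real (Suc n choose k) * c ^ (2 ^ k - 1)"
proof -
  define M where "M = lower_model_hypergraph n q"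
  define S where "S = {T. T \<subseteq> {0..n} \<and> card T = k}"
  have finite_S: "finite S"
    unfolding S_def by (rule finite_subset[of _ "Pow {0..n}"]) auto
  have "{X. int k - 1 \<le> complex_dim (lower_complex X)} \<inter> set_pmf M \<subseteq> (\<Union>T\<in>S. simplex_event T)"
  proof clarify
    fix X assume X: "int k - 1 \<le> complex_dim (lower_complex X)" "X \<in> set_pmf M"
    then obtain \<sigma> where \<sigma>: "\<sigma> \<in> lower_complex X" "k \<le> card \<sigma>"
      using complex_dim_ge_iff[OF finite_lower_complex assms(4)] by (auto simp: M_def)
    obtain T where T: "T \<subseteq> \<sigma>" "card T = k"
      using obtain_subset_with_card_n[OF \<sigma>(2)] by blast
    have "\<sigma> \<subseteq> {0..n}"
      using \<sigma>(1) X(2) lower_complex_subset_faces_of by (fastforce simp: M_def faces_of_def)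
    then have "T \<in> S"
      using T by (auto simp: S_def)
    moreover have "X \<in> simplex_event T"
      using \<sigma>(1) T(1) simplex_event_mono by (auto simp: mem_lower_complex_iff)
    ultimately show "X \<in> (\<Union>T\<in>S. simplex_event T)" by blast
  qed
  then have "measure_pmf.prob M {X. int k - 1 \<le> complex_dim (lower_complex X)}
      \<le> measure_pmf.prob M (\<Union>T\<in>S. simplex_event T)"
    by (rule prob_mono_on_set_pmf)
  also have "\<dots> \<le> (\<Sum>T\<in>S. measure_pmf.prob M (simplex_event T))"
    by (intro measure_pmf.finite_measure_subadditive_finite finite_S) auto
  also have "\<dots> \<le> (\<Sum>T\<in>S. c ^ (2 ^ k - 1))"
  proof (rule sum_mono)
    fix T assume "T \<in> S"
    then have "finite T" "card T = k"
      by (auto simp: S_def intro: finite_subset)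
    then show "measure_pmf.prob M (simplex_event T) \<le> c ^ (2 ^ k - 1)"
      using prob_simplex_event_le[of T n q c] assms(1-3) by (simp add: M_def)
  qed
  also have "\<dots> = real (Suc n choose k) * c ^ (2 ^ k - 1)"
    unfolding S_def using n_subsets[of "{0..n}" k] by simp
  finally show ?thesis
    by (simp add: M_def)
qed

lemma prob_complex_dim_less_le:
  assumes "1 \<le> k"
  shows "measure_pmf.prob (lower_model_hypergraph n q) {X. complex_dim (lower_complex X) < int k - 1}
         \<le> measure_pmf.prob (lower_model_hypergraph n q)
              {X. \<forall>\<sigma>\<in>{\<sigma>. \<sigma> \<subseteq> {0..n} \<and> card \<sigma> = k}. X \<notin> simplex_event \<sigma>}"
proof (rule prob_mono_on_set_pmf)
  show "{X. complex_dim (lower_complex X) < int k - 1} \<inter> set_pmf (lower_model_hypergraph n q)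
      \<subseteq> {X. \<forall>\<sigma>\<in>{\<sigma>. \<sigma> \<subseteq> {0..n} \<and> card \<sigma> = k}. X \<notin> simplex_event \<sigma>}"
  proof (intro subsetI CollectI ballI notI)
    fix X \<sigma>
    assume "X \<in> {X. complex_dim (lower_complex X) < int k - 1} \<inter> set_pmf (lower_model_hypergraph n q)"
    then have X: "complex_dim (lower_complex X) < int k - 1" "X \<in> set_pmf (lower_model_hypergraph n q)"
      by auto
    assume "\<sigma> \<in> {\<sigma>. \<sigma> \<subseteq> {0..n} \<and> card \<sigma> = k}" "X \<in> simplex_event \<sigma>"
    then have "\<sigma> \<in> lower_complex X" "card \<sigma> = k"
      using assms by (auto simp: mem_lower_complex_iff)
    then have "int k - 1 \<le> complex_dim (lower_complex X)"
      using complex_dim_ge_iff[OF finite_lower_complex[OF X(2)] assms] by auto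
    then show False
      using X(1) by simp
  qed
qed

section \<open>The second moment method\<close>

lemma prob_none_le_second_moment:
  fixes M :: "'a pmf" and G :: "'i \<Rightarrow> 'a set" and r :: real
  defines "P \<equiv> measure_pmf.prob M"
  assumes fin: "finite (set_pmf M)" and "finite S" "S \<noteq> {}"
    and pos: "\<And>s. s \<in> S \<Longrightarrow> 0 < P (G s)"
    and bound: "(\<Sum>s\<in>S. \<Sum>t\<in>S. P (G s \<inter> G t) / (P (G s) * P (G t))) \<le> real (card S) ^ 2 * (1 + r)"
  shows "P {x. \<forall>s\<in>S. x \<notin> G s} \<le> r"
proof -
  define N where "N = real (card S)"
  have "0 < N"
    using assms(3,4) by (simp add: N_def card_gt_0_iff)
  \<comment> \<open>The normalised count Z has mean N, and N^2 P(Z = 0) is at most its variance.\<close>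
  define Z where "Z = (\<lambda>x. \<Sum>s\<in>S. indicator (G s) x / P (G s) :: real)"
  have int: "integrable (measure_pmf M) f" for f :: "'a \<Rightarrow> real"
    using fin by (rule integrable_measure_pmf_finite)
  have EZ: "measure_pmf.expectation M Z = N"
    using pos by (simp add: Z_def N_def P_def integral_sum int less_imp_neq[symmetric])
  have "(\<lambda>x. Z x ^ 2) = (\<lambda>x. \<Sum>s\<in>S. \<Sum>t\<in>S. indicator (G s \<inter> G t) x / (P (G s) * P (G t)))"
    unfolding Z_def power2_eq_square sum_product
    by (intro ext sum.cong refl) (simp add: indicator_inter_arith)
  then have EZ2: "measure_pmf.expectation M (\<lambda>x. Z x ^ 2)
      = (\<Sum>s\<in>S. \<Sum>t\<in>S. P (G s \<inter> G t) / (P (G s) * P (G t)))"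
    by (simp add: integral_sum int P_def)
  have "N ^ 2 * P {x. Z x = 0} = measure_pmf.expectation M (\<lambda>x. N ^ 2 * indicator {x. Z x = 0} x)"
    by (simp add: P_def)
  also have "\<dots> \<le> measure_pmf.expectation M (\<lambda>x. (Z x - N) ^ 2)"
    by (intro integral_mono int) (auto simp: indicator_def)
  also have "\<dots> = measure_pmf.expectation M (\<lambda>x. Z x ^ 2) - 2 * N * measure_pmf.expectation M Z + N ^ 2"
    by (simp add: power2_diff int integral_add integral_diff)
  also have "\<dots> \<le> N ^ 2 * r"
    using bound unfolding EZ EZ2 by (simp add: N_def power2_eq_square algebra_simps)
  finally have "P {x. Z x = 0} \<le> r"
    using \<open>0 < N\<close> by simp
  moreover have "P {x. \<forall>s\<in>S. x \<notin> G s} \<le> P {x. Z x = 0}"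
    unfolding P_def by (intro measure_pmf.finite_measure_mono) (auto simp: Z_def)
  ultimately show ?thesis
    by linarith
qed

lemma card_supersets_le:
  assumes "finite A" "T \<subseteq> A"
  shows "card {S. S \<subseteq> A \<and> card S = k \<and> T \<subseteq> S} \<le> (card A - card T) choose (k - card T)"
proof -
  have fin_T: "finite T"
    using assms finite_subset by blast
  have "card {S. S \<subseteq> A \<and> card S = k \<and> T \<subseteq> S} \<le> card {U. U \<subseteq> A - T \<and> card U = k - card T}"
  proof (rule card_inj_on_le[where f = "\<lambda>S. S - T"])
    show "inj_on (\<lambda>S. S - T) {S. S \<subseteq> A \<and> card S = k \<and> T \<subseteq> S}"
      by (auto simp: inj_on_def)
    show "(\<lambda>S. S - T) ` {S. S \<subseteq> A \<and> card S = k \<and> T \<subseteq> S} \<subseteq> {U. U \<subseteq> A - T \<and> card U = k - card T}"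
      using fin_T by (auto simp: card_Diff_subset)
    show "finite {U. U \<subseteq> A - T \<and> card U = k - card T}"
      using assms(1) by simp
  qed
  also have "\<dots> = (card A - card T) choose (k - card T)"
    using assms fin_T by (simp add: n_subsets card_Diff_subset)
  finally show ?thesis .
qed

lemma binomial_diff_mult_power_le:
  assumes "j \<le> k" "k \<le> m"
  shows "real ((m - j) choose (k - j)) * real m ^ j \<le> real k ^ j * real (m choose k)"
  using assms(1)
proof (induction j)
  case (Suc j)
  define d e where "d = m - j" and "e = k - j"
  have "0 < d" "0 < e"
    using Suc.prems assms(2) by (auto simp: d_def e_def)
  obtain d' e' where "d = Suc d'" "e = Suc e'"
    using \<open>0 < d\<close> \<open>0 < e\<close> gr0_implies_Suc by blast
  moreover have "m - Suc j = d'" "k - Suc j = e'"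
    using \<open>d = Suc d'\<close> \<open>e = Suc e'\<close> by (auto simp: d_def e_def)
  ultimately have "d * ((m - Suc j) choose (k - Suc j)) = ((m - j) choose (k - j)) * e"
    using Suc_times_binomial_eq[of d' e'] by (simp add: d_def e_def)
  then have step: "real d * real ((m - Suc j) choose (k - Suc j)) = real ((m - j) choose (k - j)) * real e"
    by (metis of_nat_mult)
  have IH: "real ((m - j) choose (k - j)) * real m ^ j \<le> real k ^ j * real (m choose k)"
    using Suc by simp
  have em: "real e * real m \<le> real k * real d"
    using Suc.prems assms(2) by (simp add: d_def e_def of_nat_diff algebra_simps mult_left_mono)
  have "real d * (real ((m - Suc j) choose (k - Suc j)) * real m ^ Suc j)
      = (real ((m - j) choose (k - j)) * real m ^ j) * (real e * real m)"
    using step by (simp add: algebra_simps)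
  also have "\<dots> \<le> (real k ^ j * real (m choose k)) * (real k * real d)"
    using IH em by (rule mult_mono) simp_all
  also have "\<dots> = real d * (real k ^ Suc j * real (m choose k))"
    by (simp add: algebra_simps)
  finally show ?case
    using \<open>0 < d\<close> by simp
qed simp

lemma two_power_mult_le:
  assumes "1 \<le> j" "j \<le> k"
  shows "(2::nat) ^ j * k \<le> 2 ^ k * j"
  using assms(2)
proof (induction k rule: dec_induct)
  case (step k)
  have "(2::nat) ^ j \<le> 2 ^ k"
    using step.hyps by (simp add: power_increasing)
  also have "\<dots> \<le> 2 ^ k * j"
    using assms(1) by simp
  finally have "(2::nat) ^ j \<le> 2 ^ k * j" .
  then show ?case
    using step.IH by simp
qed simp

lemma overlap_weight_le:
  fixes a :: real
  assumes "0 \<le> a" "1 \<le> j" "j \<le> k" "k \<le> m"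
  defines "E \<equiv> ln (real m / real k) - a * 2 ^ k / real k"
  assumes "0 \<le> E"
  shows "exp a ^ (2 ^ j - 1) * (real k / real m) ^ j \<le> exp (- E)"
proof -
  have "0 < real k" "real k \<le> real m"
    using assms(2-4) by auto
  have "real (2 ^ j * k) \<le> real (2 ^ k * j)"
    using two_power_mult_le[OF assms(2,3)] by (simp only: of_nat_le_iff)
  then have "2 ^ j * real k \<le> 2 ^ k * real j"
    by simp
  then have "a * 2 ^ j \<le> real j * (a * 2 ^ k / real k)"
    using \<open>0 < real k\<close> assms(1) by (simp add: field_simps mult_left_mono)
  have "exp a ^ (2 ^ j - 1) = exp (real (2 ^ j - 1) * a)"
    by (rule exp_of_nat_mult[symmetric])
  also have "real (2 ^ j - 1) = 2 ^ j - 1"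
    by (simp add: of_nat_diff)
  finally have weight: "exp a ^ (2 ^ j - 1) = exp (a * (2 ^ j - 1))"
    by (simp only: mult.commute)
  have "(real k / real m) ^ j = exp (real j * ln (real k / real m))"
    using \<open>0 < real k\<close> \<open>real k \<le> real m\<close> by (simp add: exp_of_nat_mult)
  also have "ln (real k / real m) = - ln (real m / real k)"
    using \<open>0 < real k\<close> \<open>real k \<le> real m\<close> by (simp add: ln_div)
  finally have ratio: "(real k / real m) ^ j = exp (- (real j * ln (real m / real k)))"
    by simp
  have "exp a ^ (2 ^ j - 1) * (real k / real m) ^ j = exp (a * (2 ^ j - 1) - real j * ln (real m / real k))"
    unfolding weight ratio by (simp only: exp_add[symmetric] diff_conv_add_uminus)
  also have "\<dots> \<le> exp (- E)"
    using \<open>a * 2 ^ j \<le> _\<close> assms(1,2,6) mult_left_mono[of 1 "real j" E]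
    by (simp add: E_def algebra_simps)
  finally show ?thesis .
qed

lemma sum_overlap_weight_le:
  fixes w :: "nat \<Rightarrow> real"
  assumes "finite V" "\<sigma> \<subseteq> V" "card \<sigma> = k"
    and "w 0 = 1" "\<And>j. 0 \<le> w j" "0 \<le> \<delta>"
    and weight: "\<And>j. 1 \<le> j \<Longrightarrow> j \<le> k \<Longrightarrow> w j * (real k / real (card V)) ^ j \<le> \<delta>"
  shows "(\<Sum>\<sigma>'\<in>{S. S \<subseteq> V \<and> card S = k}. w (card (\<sigma> \<inter> \<sigma>')))
         \<le> real (card V choose k) * (1 + 2 ^ k * \<delta>)"
proof -
  define S where "S = {S. S \<subseteq> V \<and> card S = k}"
  define N where "N = real (card V choose k)"
  define overlap where "overlap T = {\<sigma>'\<in>S. \<sigma> \<inter> \<sigma>' = T}" for T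
  have fin: "finite S" "finite \<sigma>" "finite (overlap T)" for T
    using assms(1,2) finite_subset by (auto simp: S_def overlap_def)
  have "0 \<le> N"
    by (simp add: N_def)
  have class_le: "w (card T) * real (card (overlap T)) \<le> \<delta> * N" if "T \<in> Pow \<sigma> - {{}}" for T
  proof -
    have "1 \<le> card T" "card T \<le> k" "k \<le> card V"
      using that fin(2) assms(1-3) by (auto simp: Suc_le_eq card_gt_0_iff card_mono intro: finite_subset)
    have "card (overlap T) \<le> card {S. S \<subseteq> V \<and> card S = k \<and> T \<subseteq> S}"
      using fin assms(1) by (intro card_mono) (auto simp: S_def overlap_def)
    also have "\<dots> \<le> (card V - card T) choose (k - card T)"
      using that assms(2) by (intro card_supersets_le assms(1)) auto
    finally have "real (card (overlap T)) * real (card V) ^ card T \<le> real k ^ card T * N"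
      using binomial_diff_mult_power_le[OF \<open>card T \<le> k\<close> \<open>k \<le> card V\<close>] unfolding N_def
      by (meson of_nat_le_iff mult_right_mono order_trans zero_le_power of_nat_0_le_iff)
    then have "real (card (overlap T)) \<le> (real k / real (card V)) ^ card T * N"
      using \<open>1 \<le> card T\<close> \<open>card T \<le> k\<close> \<open>k \<le> card V\<close> by (simp add: power_divide field_simps)
    then have "w (card T) * real (card (overlap T)) \<le> (w (card T) * (real k / real (card V)) ^ card T) * N"
      using assms(5) by (simp add: mult_left_mono mult.assoc)
    also have "\<dots> \<le> \<delta> * N"
      using weight[OF \<open>1 \<le> card T\<close> \<open>card T \<le> k\<close>] \<open>0 \<le> N\<close> by (rule mult_right_mono)
    finally show ?thesis .
  qed
  have "(\<Sum>\<sigma>'\<in>S. w (card (\<sigma> \<inter> \<sigma>'))) = (\<Sum>T\<in>Pow \<sigma>. \<Sum>\<sigma>'\<in>overlap T. w (card (\<sigma> \<inter> \<sigma>')))"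
    unfolding overlap_def using fin by (intro sum.group[symmetric]) auto
  also have "\<dots> = (\<Sum>T\<in>Pow \<sigma>. w (card T) * real (card (overlap T)))"
    by (intro sum.cong refl) (simp add: overlap_def)
  also have "\<dots> = w 0 * real (card (overlap {})) + (\<Sum>T\<in>Pow \<sigma> - {{}}. w (card T) * real (card (overlap T)))"
    using fin(2) by (subst sum.remove[of _ "{}"]) auto
  also have "\<dots> \<le> N + (\<Sum>T\<in>Pow \<sigma> - {{}}. \<delta> * N)"
  proof (intro add_mono sum_mono class_le)
    have "card (overlap {}) \<le> card S"
      using fin by (intro card_mono) (auto simp: overlap_def)
    then show "w 0 * real (card (overlap {})) \<le> N"
      using assms(4) by (simp add: N_def S_def n_subsets assms(1))
  qed
  also have "\<dots> \<le> N * (1 + 2 ^ k * \<delta>)"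
    using fin(2) assms(3,6) \<open>0 \<le> N\<close> by (simp add: card_Pow algebra_simps mult_left_mono)
  finally show ?thesis
    by (simp add: S_def N_def)
qed

lemma prob_no_simplex_le:
  fixes a :: real
  assumes q: "\<And>\<tau>. \<tau> \<in> faces_of n \<Longrightarrow> exp (- a) \<le> q \<tau> \<and> q \<tau> \<le> 1"
    and "0 \<le> a" "1 \<le> k" "k \<le> n"
  defines "E \<equiv> ln (real (Suc n) / real k) - a * 2 ^ k / real k"
  assumes "0 \<le> E"
  shows "measure_pmf.prob (lower_model_hypergraph n q)
           {X. \<forall>\<sigma>\<in>{\<sigma>. \<sigma> \<subseteq> {0..n} \<and> card \<sigma> = k}. X \<notin> simplex_event \<sigma>}
         \<le> 2 ^ k * exp (- E)"
proof -
  define P where "P = measure_pmf.prob (lower_model_hypergraph n q)"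
  define S where "S = {\<sigma>. \<sigma> \<subseteq> {0..n} \<and> card \<sigma> = k}"
  define N where "N = real (card S)"
  have card_S: "card S = Suc n choose k"
    unfolding S_def using n_subsets[of "{0..n}" k] by simp
  have "finite S"
    unfolding S_def by (rule finite_subset[of _ "Pow {0..n}"]) auto
  have "S \<noteq> {}"
    using card_S assms(4) by (metis card.empty binomial_eq_0_iff le_SucI not_le)
  have \<sigma>: "finite \<sigma>" "Pow \<sigma> - {{}} \<subseteq> faces_of n" if "\<sigma> \<in> S" for \<sigma>
    using that assms(4) Pow_minus_empty_subset_faces_of[of \<sigma> n] by (auto simp: S_def intro: finite_subset)
  have pos: "0 < P (simplex_event \<sigma>)" if "\<sigma> \<in> S" for \<sigma>
    unfolding P_def using \<sigma>[OF that] q by (rule prob_simplex_event_pos)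
  have "(\<Sum>s\<in>S. \<Sum>t\<in>S. P (simplex_event s \<inter> simplex_event t) / (P (simplex_event s) * P (simplex_event t)))
      \<le> (\<Sum>s\<in>S. \<Sum>t\<in>S. exp a ^ (2 ^ card (s \<inter> t) - 1))"
    unfolding P_def using \<sigma> q by (intro sum_mono simplex_event_correlation_le) auto
  also have "\<dots> \<le> (\<Sum>s\<in>S. N * (1 + 2 ^ k * exp (- E)))"
  proof (intro sum_mono)
    fix s assume "s \<in> S"
    have "(\<Sum>t\<in>{\<sigma>. \<sigma> \<subseteq> {0..n} \<and> card \<sigma> = k}. exp a ^ (2 ^ card (s \<inter> t) - 1))
        \<le> real (card {0..n} choose k) * (1 + 2 ^ k * exp (- E))"
    proof (rule sum_overlap_weight_le)
      show "exp a ^ (2 ^ j - 1) * (real k / real (card {0..n})) ^ j \<le> exp (- E)"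
        if "1 \<le> j" "j \<le> k" for j
        using overlap_weight_le[OF assms(2) that, of "Suc n"] assms(4,6) by (simp add: E_def)
    qed (use \<open>s \<in> S\<close> in \<open>auto simp: S_def\<close>)
    then show "(\<Sum>t\<in>S. exp a ^ (2 ^ card (s \<inter> t) - 1)) \<le> N * (1 + 2 ^ k * exp (- E))"
      by (simp add: N_def card_S flip: S_def)
  qed
  also have "\<dots> = real (card S) ^ 2 * (1 + 2 ^ k * exp (- E))"
    by (simp add: N_def power2_eq_square)
  finally show ?thesis
    using prob_none_le_second_moment[OF finite_set_pmf_lower_model_hypergraph \<open>finite S\<close> \<open>S \<noteq> {}\<close>] pos
    by (simp add: P_def S_def)
qed

section \<open>Asymptotics\<close>

lemma tendsto_prob_1_if_exceptions_tendsto_0: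
  fixes M :: "nat \<Rightarrow> 'a pmf"
  assumes "\<And>n. - G n \<subseteq> B n \<union> C n"
    and "(\<lambda>n. measure_pmf.prob (M n) (B n)) \<longlonglongrightarrow> 0" "(\<lambda>n. measure_pmf.prob (M n) (C n)) \<longlonglongrightarrow> 0"
  shows "(\<lambda>n. measure_pmf.prob (M n) (G n)) \<longlonglongrightarrow> 1"
proof (rule tendsto_sandwich)
  have "1 - measure_pmf.prob (M n) (G n) \<le> measure_pmf.prob (M n) (B n) + measure_pmf.prob (M n) (C n)" for n
  proof -
    have "1 - measure_pmf.prob (M n) (G n) = measure_pmf.prob (M n) (- G n)"
      using measure_pmf.prob_compl[of "G n" "M n"] by (simp add: Compl_eq_Diff_UNIV)
    also have "\<dots> \<le> measure_pmf.prob (M n) (B n \<union> C n)"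
      using assms(1) by (rule measure_pmf.finite_measure_mono) simp
    also have "\<dots> \<le> measure_pmf.prob (M n) (B n) + measure_pmf.prob (M n) (C n)"
      by (rule measure_subadditive) (simp_all add: measure_pmf.emeasure_eq_measure)
    finally show ?thesis .
  qed
  then show "eventually (\<lambda>n. 1 - (measure_pmf.prob (M n) (B n) + measure_pmf.prob (M n) (C n))
      \<le> measure_pmf.prob (M n) (G n)) sequentially"
    by (simp add: algebra_simps)
  show "(\<lambda>n. 1 - (measure_pmf.prob (M n) (B n) + measure_pmf.prob (M n) (C n))) \<longlonglongrightarrow> 1"
    using tendsto_diff[OF tendsto_const tendsto_add[OF assms(2,3)], of 1] by simp
qed auto

lemma two_powr_beta_fn:
  assumes "1 < ln (real n)" "0 < y"
  shows "2 powr beta_fn n y = ln (real n) * log 2 (ln (real n)) / y"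
  using assms by (simp add: beta_fn_def powr_add powr_diff)

lemma binomial_mult_exp_power_le:
  fixes A b :: real
  assumes "0 < A" "0 \<le> b"
  defines "k \<equiv> nat \<lfloor>b\<rfloor> + 1"
  shows "real (Suc n choose k) * exp (- A) ^ (2 ^ k - 1)
         \<le> exp ((b + 1) * ln (real (Suc n)) + A - A * 2 powr b)"
proof -
  have "b < real k" "real k \<le> b + 1"
    using assms(2) by (simp_all add: k_def) linarith+
  have "Suc n choose k \<le> Suc n ^ k"
    by (cases "k \<le> Suc n") (auto simp: binomial_eq_0 intro: binomial_le_pow)
  then have "real (Suc n choose k) \<le> real (Suc n) ^ k"
    by (metis of_nat_le_iff of_nat_power)
  also have "\<dots> = exp (real k * ln (real (Suc n)))"
    by (simp add: exp_of_nat_mult)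
  also have "\<dots> \<le> exp ((b + 1) * ln (real (Suc n)))"
    using \<open>real k \<le> b + 1\<close> by (simp add: mult_right_mono)
  finally have choose_le: "real (Suc n choose k) \<le> exp ((b + 1) * ln (real (Suc n)))" .
  have "A * 2 powr b \<le> A * 2 ^ k"
    using \<open>b < real k\<close> assms(1) by (simp add: powr_realpow[symmetric] powr_mono less_imp_le)
  have "exp (- A) ^ (2 ^ k - 1) = exp (real (2 ^ k - 1) * - A)"
    by (rule exp_of_nat_mult[symmetric])
  also have "\<dots> \<le> exp (A - A * 2 powr b)"
    using \<open>A * 2 powr b \<le> A * 2 ^ k\<close> by (simp add: of_nat_diff algebra_simps)
  finally have "real (Suc n choose k) * exp (- A) ^ (2 ^ k - 1)
      \<le> exp ((b + 1) * ln (real (Suc n))) * exp (A - A * 2 powr b)"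
    using choose_le by (intro mult_mono) auto
  then show ?thesis
    by (simp add: exp_add[symmetric] add_diff_eq)
qed

lemma floor_beta_fn_bounds:
  fixes a :: real and n :: nat
  defines "L \<equiv> log 2 (ln (real n))" and "k \<equiv> nat \<lfloor>beta_fn n a\<rfloor>"
  assumes "0 < a" "1 < ln (real n)" "L + 2 \<le> beta_fn n a"
    and "beta_fn n a \<le> real n" "beta_fn n a \<le> ln (real n) / (L + 1)"
  shows "1 \<le> k" "k \<le> n" "0 \<le> ln (real (Suc n) / real k) - a * 2 ^ k / real k"
    "2 ^ k * exp (- (ln (real (Suc n) / real k) - a * 2 ^ k / real k))
       \<le> exp (beta_fn n a * (ln 2 + 1) - ln (real n) / (L + 1))"
proof -
  define \<beta> where "\<beta> = beta_fn n a"
  have "0 < L"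
    using assms(4) by (simp add: L_def)
  have k: "real k \<le> \<beta>" "\<beta> - 1 < real k"
    using assms(5) \<open>0 < L\<close> by (simp_all add: k_def \<beta>_def of_nat_nat)
  then have "L + 1 \<le> real k"
    using assms(5) by (simp add: \<beta>_def)
  then show "1 \<le> k"
    using \<open>0 < L\<close> by simp
  show "k \<le> n"
    using k assms(6) by (simp add: \<beta>_def)
  have "0 < real k"
    using \<open>0 < L\<close> \<open>L + 1 \<le> real k\<close> by linarith
  have "(2::real) ^ k \<le> 2 powr \<beta>"
    using k by (simp add: powr_realpow[symmetric] powr_mono)
  also have "\<dots> = ln (real n) * L / a"
    unfolding \<beta>_def L_def by (rule two_powr_beta_fn[OF assms(4,3)])
  finally have "a * 2 ^ k / real k \<le> ln (real n) * L / real k"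
    using assms(3) \<open>0 < real k\<close> by (simp add: field_simps)
  also have "\<dots> \<le> ln (real n) * L / (L + 1)"
    using \<open>L + 1 \<le> real k\<close> \<open>0 < L\<close> assms(4) by (intro divide_left_mono) auto
  also have "\<dots> = ln (real n) - ln (real n) / (L + 1)"
    using \<open>0 < L\<close> by (simp add: field_simps)
  finally have weight: "a * 2 ^ k / real k \<le> ln (real n) - ln (real n) / (L + 1)" .
  have "ln (real k) \<le> \<beta>"
    using k \<open>0 < real k\<close> ln_le_minus_one[of "real k"] by linarith
  moreover have "ln (real n) \<le> ln (real (Suc n))"
    using assms(4) by (cases n) auto
  moreover have "ln (real (Suc n) / real k) = ln (real (Suc n)) - ln (real k)"
    using \<open>0 < real k\<close> by (simp add: ln_div)
  ultimately have E: "ln (real n) / (L + 1) - \<beta> \<le> ln (real (Suc n) / real k) - a * 2 ^ k / real k"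
    using weight by linarith
  then show "0 \<le> ln (real (Suc n) / real k) - a * 2 ^ k / real k"
    using assms(7) by (simp add: \<beta>_def)
  have "real k * ln 2 \<le> \<beta> * ln 2"
    using k by (intro mult_right_mono) auto
  moreover have "\<beta> * (ln 2 + 1) = \<beta> * ln 2 + \<beta>"
    by (simp add: algebra_simps)
  ultimately have "real k * ln 2 - (ln (real (Suc n) / real k) - a * 2 ^ k / real k)
      \<le> \<beta> * (ln 2 + 1) - ln (real n) / (L + 1)"
    using E by linarith
  moreover have "(2::real) ^ k = exp (real k * ln 2)"
    by (simp add: exp_of_nat_mult)
  ultimately show "2 ^ k * exp (- (ln (real (Suc n) / real k) - a * 2 ^ k / real k))
      \<le> exp (beta_fn n a * (ln 2 + 1) - ln (real n) / (L + 1))"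
    by (simp only: \<beta>_def exp_add[symmetric] diff_conv_add_uminus exp_le_cancel_iff)
qed

lemma prob_complex_dim_below_beta_fn_tendsto_0:
  fixes a :: real and p :: "nat \<Rightarrow> nat set \<Rightarrow> real"
  assumes "0 < a" and p: "\<And>n \<sigma>. \<sigma> \<in> faces_of n \<Longrightarrow> exp (- a) \<le> p n \<sigma> \<and> p n \<sigma> \<le> 1"
  shows "(\<lambda>n. measure_pmf.prob (lower_model_hypergraph n (p n))
            {X. complex_dim (lower_complex X) < \<lfloor>beta_fn n a\<rfloor> - 1}) \<longlonglongrightarrow> 0"
proof (rule Lim_null_comparison)
  define L where "L n = log 2 (ln (real n))" for n :: nat
  show "(\<lambda>n. exp (beta_fn n a * (ln 2 + 1) - ln (real n) / (L n + 1))) \<longlonglongrightarrow> 0"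
    unfolding beta_fn_def L_def by real_asymp
  have "eventually (\<lambda>n. 1 < ln (real n) \<and> L n + 2 \<le> beta_fn n a \<and> beta_fn n a \<le> real n
      \<and> beta_fn n a \<le> ln (real n) / (L n + 1)) sequentially"
    unfolding beta_fn_def L_def by (intro eventually_conj; real_asymp)
  then show "eventually (\<lambda>n. norm (measure_pmf.prob (lower_model_hypergraph n (p n))
      {X. complex_dim (lower_complex X) < \<lfloor>beta_fn n a\<rfloor> - 1})
      \<le> exp (beta_fn n a * (ln 2 + 1) - ln (real n) / (L n + 1))) sequentially"
  proof eventually_elim
    case (elim n)
    define k where "k = nat \<lfloor>beta_fn n a\<rfloor>"
    from elim have "1 < ln (real n)" "L n + 2 \<le> beta_fn n a" "beta_fn n a \<le> real n"
      "beta_fn n a \<le> ln (real n) / (L n + 1)"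
      by auto
    note k = floor_beta_fn_bounds[OF assms(1) this[unfolded L_def], folded L_def k_def]
    have "int k = \<lfloor>beta_fn n a\<rfloor>"
      using k(1) unfolding k_def by (cases "0 \<le> \<lfloor>beta_fn n a\<rfloor>") auto
    then have "measure_pmf.prob (lower_model_hypergraph n (p n))
        {X. complex_dim (lower_complex X) < \<lfloor>beta_fn n a\<rfloor> - 1}
        \<le> measure_pmf.prob (lower_model_hypergraph n (p n))
          {X. \<forall>\<sigma>\<in>{\<sigma>. \<sigma> \<subseteq> {0..n} \<and> card \<sigma> = k}. X \<notin> simplex_event \<sigma>}"
      using prob_complex_dim_less_le[OF k(1)] by simp
    also have "\<dots> \<le> 2 ^ k * exp (- (ln (real (Suc n) / real k) - a * 2 ^ k / real k))"
      using p assms(1) k(1-3) by (intro prob_no_simplex_le) auto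
    also have "\<dots> \<le> exp (beta_fn n a * (ln 2 + 1) - ln (real n) / (L n + 1))"
      by (rule k(4))
    finally show ?case
      by simp
  qed
qed

lemma prob_complex_dim_above_beta_fn_le:
  fixes A \<epsilon> :: real
  assumes "0 < A" "0 < \<epsilon>" "\<And>\<tau>. \<tau> \<in> faces_of n \<Longrightarrow> 0 \<le> q \<tau> \<and> q \<tau> \<le> exp (- A)"
    and "1 < ln (real n)" "0 \<le> beta_fn n A"
  shows "measure_pmf.prob (lower_model_hypergraph n q)
           {X. beta_fn n A - 1 + \<epsilon> < real_of_int (complex_dim (lower_complex X))}
         \<le> exp ((beta_fn n A + \<epsilon> + 1) * ln (real (Suc n)) + A
                 - 2 powr \<epsilon> * (log 2 (ln (real n)) * ln (real n)))"
proof -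
  define b where "b = beta_fn n A + \<epsilon>"
  define k where "k = nat \<lfloor>b\<rfloor> + 1"
  have "0 \<le> b"
    using assms(2,5) by (simp add: b_def)
  have event: "{X. beta_fn n A - 1 + \<epsilon> < real_of_int (complex_dim (lower_complex X))}
      = {X. int k - 1 \<le> complex_dim (lower_complex X)}"
    using \<open>0 \<le> b\<close> by (auto simp: k_def b_def floor_le_iff)
  have "measure_pmf.prob (lower_model_hypergraph n q) {X. int k - 1 \<le> complex_dim (lower_complex X)}
      \<le> real (Suc n choose k) * exp (- A) ^ (2 ^ k - 1)"
    using assms(1,3) by (intro prob_complex_dim_ge_le) (auto simp: k_def)
  also have "\<dots> \<le> exp ((b + 1) * ln (real (Suc n)) + A - A * 2 powr b)"
    unfolding k_def by (rule binomial_mult_exp_power_le[OF assms(1) \<open>0 \<le> b\<close>])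
  also have "A * 2 powr b = 2 powr \<epsilon> * (log 2 (ln (real n)) * ln (real n))"
    using two_powr_beta_fn[OF assms(4,1)] assms(1) by (simp add: b_def powr_add)
  finally show ?thesis
    unfolding event b_def .
qed

lemma prob_complex_dim_above_beta_fn_tendsto_0:
  fixes A \<epsilon> :: real and p :: "nat \<Rightarrow> nat set \<Rightarrow> real"
  assumes "0 < A" "0 < \<epsilon>" and p: "\<And>n \<sigma>. \<sigma> \<in> faces_of n \<Longrightarrow> 0 \<le> p n \<sigma> \<and> p n \<sigma> \<le> exp (- A)"
  shows "(\<lambda>n. measure_pmf.prob (lower_model_hypergraph n (p n))
            {X. beta_fn n A - 1 + \<epsilon> < real_of_int (complex_dim (lower_complex X))}) \<longlonglongrightarrow> 0"
proof (rule Lim_null_comparison)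
  define g where "g n = log 2 (ln (real n)) * ln (real n)" for n :: nat
  define h where "h n = ((beta_fn n A + \<epsilon> + 1) * ln (real (Suc n)) + A) / g n - 2 powr \<epsilon>" for n
  have "filterlim g at_top sequentially"
    unfolding g_def by real_asymp
  moreover have "h \<longlonglongrightarrow> 1 - 2 powr \<epsilon>"
  proof -
    have "(\<lambda>n. ((beta_fn n A + \<epsilon> + 1) * ln (real (Suc n)) + A) / g n) \<longlonglongrightarrow> 1"
      unfolding beta_fn_def g_def by real_asymp
    then show ?thesis
      unfolding h_def by (intro tendsto_intros)
  qed
  ultimately have "filterlim (\<lambda>n. h n * g n) at_bot sequentially"
    using assms(2) by (intro filterlim_tendsto_neg_mult_at_bot) auto
  then show "(\<lambda>n. exp (h n * g n)) \<longlonglongrightarrow> 0"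
    by (rule filterlim_compose[OF exp_at_bot])
  have "eventually (\<lambda>n. 1 < ln (real n) \<and> 0 \<le> beta_fn n A) sequentially"
    unfolding beta_fn_def by (intro eventually_conj; real_asymp)
  then show "eventually (\<lambda>n. norm (measure_pmf.prob (lower_model_hypergraph n (p n))
      {X. beta_fn n A - 1 + \<epsilon> < real_of_int (complex_dim (lower_complex X))}) \<le> exp (h n * g n)) sequentially"
  proof eventually_elim
    case (elim n)
    then have "0 < g n"
      by (simp add: g_def)
    then have "h n * g n = (beta_fn n A + \<epsilon> + 1) * ln (real (Suc n)) + A - 2 powr \<epsilon> * g n"
      by (simp add: h_def field_simps)
    then show ?case
      using prob_complex_dim_above_beta_fn_le[OF assms(1,2) p] elim by (simp add: g_def)
  qed
qed

theorem proposition5p1: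
  fixes a A \<epsilon>0 :: real
    and p :: "nat \<Rightarrow> nat set \<Rightarrow> real"
  assumes "0 < A" and "A \<le> a" and "0 < \<epsilon>0"
    and "\<And>n \<sigma>. \<sigma> \<in> faces_of n \<Longrightarrow> exp (- a) \<le> p n \<sigma> \<and> p n \<sigma> \<le> exp (- A)"
  shows "(\<lambda>n. measure_pmf.prob (lower_model_hypergraph n (p n))
            {X. \<lfloor>beta_fn n a\<rfloor> - 1 \<le> complex_dim (lower_complex X) \<and>
                real_of_int (complex_dim (lower_complex X)) \<le> beta_fn n A - 1 + \<epsilon>0})
         \<longlonglongrightarrow> 1"
proof (rule tendsto_prob_1_if_exceptions_tendsto_0)
  have "exp (- A) \<le> 1"
    using assms(1) by simp
  then have "exp (- a) \<le> p n \<sigma> \<and> p n \<sigma> \<le> 1" "0 \<le> p n \<sigma> \<and> p n \<sigma> \<le> exp (- A)"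
    if "\<sigma> \<in> faces_of n" for n \<sigma>
    using assms(4)[OF that] exp_ge_zero[of "- a"] by linarith+
  then show "(\<lambda>n. measure_pmf.prob (lower_model_hypergraph n (p n))
      {X. complex_dim (lower_complex X) < \<lfloor>beta_fn n a\<rfloor> - 1}) \<longlonglongrightarrow> 0"
    "(\<lambda>n. measure_pmf.prob (lower_model_hypergraph n (p n))
      {X. beta_fn n A - 1 + \<epsilon>0 < real_of_int (complex_dim (lower_complex X))}) \<longlonglongrightarrow> 0"
    using assms(1-3) by (auto intro!: prob_complex_dim_below_beta_fn_tendsto_0
        prob_complex_dim_above_beta_fn_tendsto_0)
qed auto

end
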